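(* Fix $\lambda>0$ and let $\mathrm{SU}(2)\subset\mathrm{SO}(4)\times\{1\}$ act on $\Lambda^2_-S^4$ as the lift of its standard action (via $(x_1,\dots,x_4)\leftrightarrow(x_1+ix_2,x_3+ix_4)\in\mathbb C^2$, fixing $x_5$). Let $I\subset\mathbb R$ be an open interval and $c(t)=\big({}^t(x_1(t),0,0,0,x_5(t)),{}^t(a_1(t),a_2(t),a_3(t))\big)$ a smooth path with $x_1(t)>0$, $x_1^2+x_5^2=1$. Then $\varphi_\lambda$ vanishes on the tangent spaces of $\mathrm{SU}(2)\cdot c(I)$ if and only if, for $i=1,2,3$, $$4\dot a_i\,\frac{1-x_5}{1+x_5}-a_i\,\frac{d}{dt}\Big\{\log(\lambda+r^2)+8\log(1+x_5)\Big\}=0,$$ where $r^2=a_1^2+a_2^2+a_3^2$.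
   Context: Let $S^4=\{x={}^t(x_1,\dots,x_5)\in\mathbb R^5:|x|=1\}$ with the round metric and let $\pi:\Lambda^2_-S^4\to S^4$ be the rank-3 bundle of anti-self-dual 2-forms. On $S^4\setminus\{x_5=\pm1\}$ use the oriented orthonormal frame $e_1=\frac{1}{\sqrt{1-x_5^2}}{}^t(-x_2,x_1,-x_4,x_3,0)$, $e_2=\frac{1}{\sqrt{1-x_5^2}}{}^t(-x_3,x_4,x_1,-x_2,0)$, $e_3=\frac{1}{\sqrt{1-x_5^2}}{}^t(-x_4,-x_3,x_2,x_1,0)$, $e_4=\frac{1}{\sqrt{1-x_5^2}}{}^t(-x_1x_5,-x_2x_5,-x_3x_5,-x_4x_5,1-x_5^2)$ with dual coframe $e^1,\dots,e^4$, and set $\omega_1=e^{12}-e^{34}$, $\omega_2=e^{13}-e^{42}$, $\omega_3=e^{14}-e^{23}$ ($e^{ij}=e^i\wedge e^j$), a local frame of $\Lambda^2_-S^4$. The point $\sum_i a_i\omega_i|_x$ is written $(x,{}^t(a_1,a_2,a_3))$; $r^2=a_1^2+a_2^2+a_3^2$ is the squared fiber norm (globally defined). Write $\nabla\omega_i=\sum_j\gamma_{ij}\otimes\omega_j$ for the connection induced by the Levi-Civita connection and $b_i=da_i+\sum_j a_j\pi^*\gamma_{ji}$. For $\lambda>0$ the Bryant–Salamon 3-form is $\varphi_\lambda=2s_\lambda\sum_{i=1}^3 b_i\wedge\pi^*\omega_i+s_\lambda^{-3}b_1\wedge b_2\wedge b_3$ with $s_\lambda=(\lambda+r^2)^{1/4}$;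 it is a torsion-free $G_2$-structure. A 4-dimensional submanifold $L$ is coassociative iff $\varphi_\lambda|_{TL}=0$. $\mathrm{SO}(5)$ acts on $S^4$ linearly and on $\Lambda^2_-S^4$ by the induced action on 2-forms ($g\cdot\omega=(g^{-1})^*\omega$), preserving $\varphi_\lambda$. *)

theory Defs
  imports "HOL-Analysis.Analysis"
begin

text \<open>A point of the total space of the bundle of
anti-self-dual 2-forms over the chart of S^4 with x5 different from 1 and -1 is a pair
(x, a) with x in real^5 (the point of S^4 in ambient coordinates) and a in real^3
(the coefficients w.r.t. the frame omega_1, omega_2, omega_3).  Tangent vectors of
the total space are pairs (xi, alpha) in real^5 x real^3, xi tangent to S^4.\<close>

definition fc :: "real^3 \<Rightarrow> nat \<Rightarrow> real" where
  "fc a j = a $ (of_nat j)"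

text \<open>The orthonormal frame e_1,...,e_4 (ambient vectors in real^5).\<close>
definition frame :: "nat \<Rightarrow> real^5 \<Rightarrow> real^5" where
  "frame k x =
     (if k = 1 then (1 / sqrt (1 - (x$5)\<^sup>2)) *\<^sub>R vector [-(x$2), x$1, -(x$4), x$3, 0]
      else if k = 2 then (1 / sqrt (1 - (x$5)\<^sup>2)) *\<^sub>R vector [-(x$3), x$4, x$1, -(x$2), 0]
      else if k = 3 then (1 / sqrt (1 - (x$5)\<^sup>2)) *\<^sub>R vector [-(x$4), -(x$3), x$2, x$1, 0]
      else if k = 4 then (1 / sqrt (1 - (x$5)\<^sup>2)) *\<^sub>R
              vector [-(x$1) * x$5, -(x$2) * x$5, -(x$3) * x$5, -(x$4) * x$5, 1 - (x$5)\<^sup>2]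
      else 0)"

definition cof :: "nat \<Rightarrow> real^5 \<Rightarrow> real^5 \<Rightarrow> real" where
  "cof k x u = frame k x \<bullet> u"

text \<open>e^{kl} = e^k wedge e^l (determinant convention).\<close>
definition cof2 :: "nat \<Rightarrow> nat \<Rightarrow> real^5 \<Rightarrow> real^5 \<Rightarrow> real^5 \<Rightarrow> real" where
  "cof2 k l x u v = cof k x u * cof l x v - cof l x u * cof k x v"

definition om :: "nat \<Rightarrow> real^5 \<Rightarrow> real^5 \<Rightarrow> real^5 \<Rightarrow> real" where
  "om i x u v =
     (if i = 1 then cof2 1 2 x u v - cof2 3 4 x u v
      else if i = 2 then cof2 1 3 x u v - cof2 4 2 x u v
      else if i = 3 then cof2 1 4 x u v - cof2 2 3 x u v
      else 0)"

text \<open>Levi-Civita connection forms of the frame: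
  theta m k (xi) = < nabla_xi e_k , e_m >, where nabla_xi e_k is the tangential part
  of the ambient directional derivative of e_k.\<close>
definition Dframe :: "nat \<Rightarrow> real^5 \<Rightarrow> real^5 \<Rightarrow> real^5" where
  "Dframe k x xi = vector_derivative (\<lambda>s. frame k (x + s *\<^sub>R xi)) (at 0)"

definition theta :: "nat \<Rightarrow> nat \<Rightarrow> real^5 \<Rightarrow> real^5 \<Rightarrow> real" where
  "theta m k x xi = frame m x \<bullet> Dframe k x xi"

text \<open>(nabla_xi omega_i)(e_k, e_l), using that omega_i(e_k,e_l) is constant.\<close>
definition nom :: "nat \<Rightarrow> real^5 \<Rightarrow> real^5 \<Rightarrow> nat \<Rightarrow> nat \<Rightarrow> real" where
  "nom i x xi k l =
     - (\<Sum>m\<in>{1..4}. theta m k x xi * om i x (frame m x) (frame l x))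
     - (\<Sum>m\<in>{1..4}. theta m l x xi * om i x (frame k x) (frame m x))"

text \<open>gamma_ij with nabla omega_i = sum_j gamma_ij (x) omega_j; since the omega_j are
  orthogonal with squared norm 2, gamma_ij(xi) = 1/2 sum_{k<l} (nabla_xi omega_i)(e_k,e_l) omega_j(e_k,e_l).\<close>
definition gam :: "nat \<Rightarrow> nat \<Rightarrow> real^5 \<Rightarrow> real^5 \<Rightarrow> real" where
  "gam i j x xi = (1/4) * (\<Sum>k\<in>{1..4}. \<Sum>l\<in>{1..4}. nom i x xi k l * om j x (frame k x) (frame l x))"

type_synonym tpt = "(real^5) \<times> (real^3)"

definition bform :: "nat \<Rightarrow> tpt \<Rightarrow> tpt \<Rightarrow> real" where
  "bform i p V = fc (snd V) i + (\<Sum>j\<in>{1..3}. fc (snd p) j * gam j i (fst p) (fst V))"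

definition piom :: "nat \<Rightarrow> tpt \<Rightarrow> tpt \<Rightarrow> tpt \<Rightarrow> real" where
  "piom i p V W = om i (fst p) (fst V) (fst W)"

definition wedge12 :: "(tpt \<Rightarrow> real) \<Rightarrow> (tpt \<Rightarrow> tpt \<Rightarrow> real) \<Rightarrow> tpt \<Rightarrow> tpt \<Rightarrow> tpt \<Rightarrow> real" where
  "wedge12 \<beta> \<omega> U V W = \<beta> U * \<omega> V W - \<beta> V * \<omega> U W + \<beta> W * \<omega> U V"

definition wedge111 :: "(tpt \<Rightarrow> real) \<Rightarrow> (tpt \<Rightarrow> real) \<Rightarrow> (tpt \<Rightarrow> real) \<Rightarrow> tpt \<Rightarrow> tpt \<Rightarrow> tpt \<Rightarrow> real" where
  "wedge111 b1 b2 b3 U V W =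
     b1 U * (b2 V * b3 W - b2 W * b3 V)
   - b1 V * (b2 U * b3 W - b2 W * b3 U)
   + b1 W * (b2 U * b3 V - b2 V * b3 U)"

definition rsq :: "real^3 \<Rightarrow> real" where
  "rsq a = (\<Sum>j\<in>{1..3}. (fc a j)\<^sup>2)"

definition slam :: "real \<Rightarrow> real^3 \<Rightarrow> real" where
  "slam lam a = (lam + rsq a) powr (1/4)"

definition phiBS :: "real \<Rightarrow> tpt \<Rightarrow> tpt \<Rightarrow> tpt \<Rightarrow> tpt \<Rightarrow> real" where
  "phiBS lam p U V W =
     2 * slam lam (snd p) * (\<Sum>i\<in>{1..3}. wedge12 (bform i p) (piom i p) U V W)
   + (1 / (slam lam (snd p)) ^ 3) * wedge111 (bform 1 p) (bform 2 p) (bform 3 p) U V W"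

text \<open>SU(2) element [[al, -cnj be],[be, cnj al]] (|al|^2+|be|^2 = 1) acting on
  R^5 = C^2 x R via (x1,...,x4) <-> (x1 + i x2, x3 + i x4), fixing x5.\<close>
definition su2R5 :: "complex \<Rightarrow> complex \<Rightarrow> real^5 \<Rightarrow> real^5" where
  "su2R5 al be x =
     (let z1 = Complex (x$1) (x$2); z2 = Complex (x$3) (x$4);
          w1 = al * z1 - cnj be * z2; w2 = be * z1 + cnj al * z2
      in vector [Re w1, Im w1, Re w2, Im w2, x$5])"

text \<open>Induced action on 2-forms: g . (x, sum_j a_j omega_j|x) = (g x, (g^-1)^* sum_j a_j omega_j|x),
  re-expressed in the frame omega_i at g x.  The inverse of (al,be) is (cnj al, -be).\<close>
definition su2lift :: "complex \<Rightarrow> complex \<Rightarrow> tpt \<Rightarrow> tpt" where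
  "su2lift al be p =
     (let x = fst p; a = snd p; y = su2R5 al be x;
          ginv = su2R5 (cnj al) (- be);
          coef = (\<lambda>i. (1/4) * (\<Sum>k\<in>{1..4}. \<Sum>l\<in>{1..4}.
                    (\<Sum>j\<in>{1..3}. fc a j * om j x (ginv (frame k y)) (ginv (frame l y)))
                    * om i y (frame k y) (frame l y)))
      in (y, vector [coef 1, coef 2, coef 3]))"

text \<open>Tangent vectors of the image of F : SU(2) x I -> total space at F(al,be,t):
  velocities of images of differentiable curves in SU(2) x I through (al,be,t).\<close>
definition tanvecs :: "(complex \<Rightarrow> complex \<Rightarrow> real \<Rightarrow> tpt) \<Rightarrow> real set \<Rightarrow> complex \<Rightarrow> complex \<Rightarrow> real \<Rightarrow> tpt set" where
  "tanvecs F I al be t =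
     {V. \<exists>ga gb \<tau>. ga 0 = al \<and> gb 0 = be \<and> \<tau> 0 = t \<and>
          (\<forall>s. (cmod (ga s))\<^sup>2 + (cmod (gb s))\<^sup>2 = 1 \<and> \<tau> s \<in> I) \<and>
          ga differentiable (at 0) \<and> gb differentiable (at 0) \<and> \<tau> differentiable (at 0) \<and>
          ((\<lambda>s. F (ga s) (gb s) (\<tau> s)) has_vector_derivative V) (at 0)}"

definition phi_vanishes_on_orbit :: "real \<Rightarrow> real set \<Rightarrow> (real \<Rightarrow> tpt) \<Rightarrow> bool" where
  "phi_vanishes_on_orbit lam I c =
     (let F = (\<lambda>al be t. su2lift al be (c t)) in
      \<forall>t\<in>I. \<forall>al be. (cmod al)\<^sup>2 + (cmod be)\<^sup>2 = 1 \<longrightarrow>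
        (\<forall>U\<in>tanvecs F I al be t. \<forall>V\<in>tanvecs F I al be t. \<forall>W\<in>tanvecs F I al be t.
           phiBS lam (F al be t) U V W = 0))"

definition smooth_on :: "real set \<Rightarrow> (real \<Rightarrow> real) \<Rightarrow> bool" where
  "smooth_on I f = (\<forall>n. \<forall>t\<in>I. ((deriv ^^ n) f) differentiable (at t))"

end

theory Submission
  imports Defs
begin

(* The orbit SU(2).c(I) is swept out by the curve c, which runs in the slice
   {(x1,0,0,0,x5)} of S^4, and phi_lambda is SU(2)-invariant. *)

lemma exhaust_5:
  fixes x :: 5
  shows "x = 1 \<or> x = 2 \<or> x = 3 \<or> x = 4 \<or> x = 5"
proof (induct x)
  case (of_int z)
  then have "z = 0 \<or> z = 1 \<or> z = 2 \<or> z = 3 \<or> z = 4" by fastforce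
  then show ?case by auto
qed

lemma sum_UNIV_5: "sum f (UNIV :: 5 set) = f 1 + f 2 + f 3 + f 4 + f 5"
proof -
  have univ: "(UNIV :: 5 set) = {1, 2, 3, 4, 5}" using exhaust_5 by auto
  show ?thesis unfolding univ by (simp add: ac_simps)
qed

lemma vector_5_nth [simp]:
  "(vector [a,b,c,d,e] :: ('a::zero)^5) $ 1 = a"
  "(vector [a,b,c,d,e] :: ('a::zero)^5) $ 2 = b"
  "(vector [a,b,c,d,e] :: ('a::zero)^5) $ 3 = c"
  "(vector [a,b,c,d,e] :: ('a::zero)^5) $ 4 = d"
  "(vector [a,b,c,d,e] :: ('a::zero)^5) $ 5 = e"
  unfolding vector_def by simp_all

lemma inner_real5: "(u::real^5) \<bullet> v = u$1 * v$1 + u$2 * v$2 + u$3 * v$3 + u$4 * v$4 + u$5 * v$5"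
  by (simp add: inner_vec_def sum_UNIV_5)

lemma vec5_eq_iff:
  "(u::real^5) = v \<longleftrightarrow> u$1 = v$1 \<and> u$2 = v$2 \<and> u$3 = v$3 \<and> u$4 = v$4 \<and> u$5 = v$5"
  unfolding vec_eq_iff by (metis exhaust_5)

lemma vec3_eq_iff: "(u::real^3) = v \<longleftrightarrow> u$1 = v$1 \<and> u$2 = v$2 \<and> u$3 = v$3"
  unfolding vec_eq_iff by (metis exhaust_3)

lemma sum_1_to_4: "sum f {1..4::nat} = f 1 + f 2 + f 3 + f 4"
proof -
  have "{1..4::nat} = {1,2,3,4}" by auto
  then show ?thesis by (simp add: ac_simps)
qed

lemma sum_1_to_3: "sum f {1..3::nat} = f 1 + f 2 + f 3"
proof -
  have "{1..3::nat} = {1,2,3}" by auto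
  then show ?thesis by (simp add: ac_simps)
qed

lemma vector5_has_vector_derivative:
  assumes "(p1 has_real_derivative d1) (at x within S)" "(p2 has_real_derivative d2) (at x within S)"
    "(p3 has_real_derivative d3) (at x within S)" "(p4 has_real_derivative d4) (at x within S)"
    "(p5 has_real_derivative d5) (at x within S)"
  shows "((\<lambda>s. vector [p1 s, p2 s, p3 s, p4 s, p5 s] :: real^5) has_vector_derivative
           vector [d1, d2, d3, d4, d5]) (at x within S)"
proof -
  define b1 :: "real^5" where "b1 = vector [1,0,0,0,0]"
  define b2 :: "real^5" where "b2 = vector [0,1,0,0,0]"
  define b3 :: "real^5" where "b3 = vector [0,0,1,0,0]"
  define b4 :: "real^5" where "b4 = vector [0,0,0,1,0]"
  define b5 :: "real^5" where "b5 = vector [0,0,0,0,1]"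
  have split: "vector [q1, q2, q3, q4, q5] = q1 *\<^sub>R b1 + q2 *\<^sub>R b2 + q3 *\<^sub>R b3 + q4 *\<^sub>R b4 + q5 *\<^sub>R b5"
    for q1 q2 q3 q4 q5 by (simp add: vec5_eq_iff b1_def b2_def b3_def b4_def b5_def)
  show ?thesis
    unfolding split
    by (auto intro!: derivative_eq_intros assms)
qed

lemma vector3_has_vector_derivative:
  assumes "(p1 has_real_derivative d1) (at x within S)" "(p2 has_real_derivative d2) (at x within S)"
    "(p3 has_real_derivative d3) (at x within S)"
  shows "((\<lambda>s. vector [p1 s, p2 s, p3 s] :: real^3) has_vector_derivative
           vector [d1, d2, d3]) (at x within S)"
proof -
  define b1 :: "real^3" where "b1 = vector [1,0,0]"
  define b2 :: "real^3" where "b2 = vector [0,1,0]"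
  define b3 :: "real^3" where "b3 = vector [0,0,1]"
  have split: "vector [q1, q2, q3] = q1 *\<^sub>R b1 + q2 *\<^sub>R b2 + q3 *\<^sub>R b3" for q1 q2 q3
    by (simp add: vec3_eq_iff b1_def b2_def b3_def)
  show ?thesis
    unfolding split by (auto intro!: derivative_eq_intros assms)
qed

section \<open>The SU(2) action on R^5\<close>

lemma su2R5_coords:
  "su2R5 al be x = vector [Re al * x$1 - Im al * x$2 - (Re be * x$3 + Im be * x$4),
                           Re al * x$2 + Im al * x$1 - (Re be * x$4 - Im be * x$3),
                           Re be * x$1 - Im be * x$2 + Re al * x$3 + Im al * x$4,
                           Re be * x$2 + Im be * x$1 + Re al * x$4 - Im al * x$3,
                           x$5]"
  by (simp add: su2R5_def Let_def algebra_simps)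

lemma su2R5_scaleR: "su2R5 al be (c *\<^sub>R u) = c *\<^sub>R su2R5 al be u"
  by (simp add: su2R5_coords vec5_eq_iff algebra_simps)

lemma su2R5_add: "su2R5 al be (u + v) = su2R5 al be u + su2R5 al be v"
  by (simp add: su2R5_coords vec5_eq_iff algebra_simps)

lemma su2R5_nth5 [simp]: "su2R5 al be u $ 5 = u $ 5"
  by (simp add: su2R5_coords)

lemma su2_unit_coords:
  "(cmod al)\<^sup>2 + (cmod be)\<^sup>2 = 1 \<Longrightarrow> (Re al)\<^sup>2 + (Im al)\<^sup>2 + (Re be)\<^sup>2 + (Im be)\<^sup>2 = 1"
  by (simp add: cmod_power2)

lemma su2R5_inner:
  assumes "(cmod al)\<^sup>2 + (cmod be)\<^sup>2 = 1"
  shows "su2R5 al be u \<bullet> su2R5 al be v = u \<bullet> v"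
proof -
  have n: "(Re al)\<^sup>2 + (Im al)\<^sup>2 + (Re be)\<^sup>2 + (Im be)\<^sup>2 = 1" using su2_unit_coords[OF assms] .
  have "su2R5 al be u \<bullet> su2R5 al be v =
     ((Re al)\<^sup>2 + (Im al)\<^sup>2 + (Re be)\<^sup>2 + (Im be)\<^sup>2) * (u$1 * v$1 + u$2 * v$2 + u$3 * v$3 + u$4 * v$4)
     + u$5 * v$5"
    by (simp add: inner_real5 su2R5_coords) (simp add: algebra_simps power2_eq_square)
  also have "\<dots> = u \<bullet> v" by (simp add: n inner_real5)
  finally show ?thesis .
qed

lemma su2R5_inverse:
  assumes "(cmod al)\<^sup>2 + (cmod be)\<^sup>2 = 1"
  shows "su2R5 (cnj al) (- be) (su2R5 al be v) = v"
proof -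
  have n: "(Re al)\<^sup>2 + (Im al)\<^sup>2 + (Re be)\<^sup>2 + (Im be)\<^sup>2 = 1" using su2_unit_coords[OF assms] .
  show ?thesis
    by (simp add: su2R5_coords vec5_eq_iff) (use n in algebra)
qed

lemma frame_su2R5: "frame k (su2R5 al be y) = su2R5 al be (frame k y)"
  unfolding frame_def
  by (simp add: su2R5_scaleR) (simp add: su2R5_coords vec5_eq_iff algebra_simps)

lemma cof_su2R5:
  assumes "(cmod al)\<^sup>2 + (cmod be)\<^sup>2 = 1"
  shows "cof k (su2R5 al be y) (su2R5 al be u) = cof k y u"
  by (simp add: cof_def frame_su2R5 su2R5_inner[OF assms])

lemma om_su2R5:
  assumes "(cmod al)\<^sup>2 + (cmod be)\<^sup>2 = 1"
  shows "om i (su2R5 al be y) (su2R5 al be u) (su2R5 al be v) = om i y u v"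
  by (simp add: om_def cof2_def cof_su2R5[OF assms])

definition frame_scale :: "real^5 \<Rightarrow> real" where
  "frame_scale x = 1 / sqrt (1 - (x$5)\<^sup>2)"

definition frame_scale_deriv :: "real^5 \<Rightarrow> real^5 \<Rightarrow> real" where
  "frame_scale_deriv y \<xi> = y$5 * \<xi>$5 / (sqrt (1 - (y$5)\<^sup>2) * (1 - (y$5)\<^sup>2))"

definition frame_field :: "nat \<Rightarrow> real^5 \<Rightarrow> real^5" where
  "frame_field k x =
     (if k = 1 then vector [-(x$2), x$1, -(x$4), x$3, 0]
      else if k = 2 then vector [-(x$3), x$4, x$1, -(x$2), 0]
      else if k = 3 then vector [-(x$4), -(x$3), x$2, x$1, 0]
      else if k = 4 then vector [-(x$1) * x$5, -(x$2) * x$5, -(x$3) * x$5, -(x$4) * x$5, 1 - (x$5)\<^sup>2]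
      else 0)"

definition frame_field_deriv :: "nat \<Rightarrow> real^5 \<Rightarrow> real^5 \<Rightarrow> real^5" where
  "frame_field_deriv k x \<xi> =
     (if k = 1 then vector [-(\<xi>$2), \<xi>$1, -(\<xi>$4), \<xi>$3, 0]
      else if k = 2 then vector [-(\<xi>$3), \<xi>$4, \<xi>$1, -(\<xi>$2), 0]
      else if k = 3 then vector [-(\<xi>$4), -(\<xi>$3), \<xi>$2, \<xi>$1, 0]
      else if k = 4 then vector [-(\<xi>$1 * x$5 + x$1 * \<xi>$5), -(\<xi>$2 * x$5 + x$2 * \<xi>$5),
          -(\<xi>$3 * x$5 + x$3 * \<xi>$5), -(\<xi>$4 * x$5 + x$4 * \<xi>$5), - (2 * x$5 * \<xi>$5)]
      else 0)"

lemma frame_factor: "frame k x = frame_scale x *\<^sub>R frame_field k x"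
  by (simp add: frame_def frame_field_def frame_scale_def)

lemma inv_sqrt_one_minus_square_deriv:
  fixes a b :: real
  assumes p: "0 < 1 - a\<^sup>2"
  shows "((\<lambda>s. 1 / sqrt (1 - (a + s * b)\<^sup>2)) has_real_derivative
     (a * b / (sqrt (1 - a\<^sup>2) * (1 - a\<^sup>2)))) (at 0)"
proof -
  have d1: "((\<lambda>s. 1 - (a + s * b)\<^sup>2) has_real_derivative (- (2 * a * b))) (at 0)"
    by (auto intro!: derivative_eq_intros)
  have d2: "((\<lambda>s. sqrt (1 - (a + s * b)\<^sup>2)) has_real_derivative
      (inverse (sqrt (1 - a\<^sup>2)) / 2 * (- (2 * a * b)))) (at 0)"
    using DERIV_chain2[OF DERIV_real_sqrt d1] p by simp
  have d3: "((\<lambda>s. inverse (sqrt (1 - (a + s * b)\<^sup>2))) has_real_derivative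
     (- (inverse (sqrt (1 - a\<^sup>2)) / 2 * (- (2 * a * b))) * inverse (sqrt (1 - a\<^sup>2) ^ 2))) (at 0)"
    using DERIV_inverse_fun[OF d2] p by simp
  have e: "- (inverse (sqrt (1 - a\<^sup>2)) / 2 * (- (2 * a * b))) * inverse (sqrt (1 - a\<^sup>2) ^ 2)
      = a * b / (sqrt (1 - a\<^sup>2) * (1 - a\<^sup>2))"
    using p by (simp add: field_simps)
  show ?thesis using d3 unfolding e by (simp add: divide_inverse)
qed

lemma frame_scale_has_derivative:
  assumes "(y$5)\<^sup>2 < 1"
  shows "((\<lambda>s. frame_scale (y + s *\<^sub>R \<xi>)) has_real_derivative frame_scale_deriv y \<xi>) (at 0)"
  using inv_sqrt_one_minus_square_deriv[of "y$5" "\<xi>$5"] assms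
  by (simp add: frame_scale_def frame_scale_deriv_def)

lemma frame_field_has_derivative:
  "((\<lambda>s. frame_field k (y + s *\<^sub>R \<xi>)) has_vector_derivative frame_field_deriv k y \<xi>) (at 0)"
proof -
  consider "k = 1" | "k = 2" | "k = 3" | "k = 4" | "k \<notin> {1,2,3,4}" by blast
  then show ?thesis
  proof cases
    case 5
    then show ?thesis by (simp add: frame_field_def frame_field_deriv_def)
  qed (simp add: frame_field_def frame_field_deriv_def, intro vector5_has_vector_derivative;
       auto intro!: derivative_eq_intros)+
qed

lemma Dframe_formula:
  assumes "(y$5)\<^sup>2 < 1"
  shows "Dframe k y \<xi> = frame_scale y *\<^sub>R frame_field_deriv k y \<xi> + frame_scale_deriv y \<xi> *\<^sub>R frame_field k y"
proof -
  have "((\<lambda>s. frame k (y + s *\<^sub>R \<xi>)) has_vector_derivative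
      (frame_scale (y + 0 *\<^sub>R \<xi>) *\<^sub>R frame_field_deriv k y \<xi>
       + frame_scale_deriv y \<xi> *\<^sub>R frame_field k (y + 0 *\<^sub>R \<xi>))) (at 0)"
    unfolding frame_factor
    by (rule has_vector_derivative_scaleR[OF frame_scale_has_derivative[OF assms] frame_field_has_derivative])
  then show ?thesis unfolding Dframe_def by (simp add: vector_derivative_at)
qed
section \<open>SU(2)-invariance of the Bryant--Salamon form\<close>

text \<open>Since the action is linear and commutes with the frame, it commutes with the derivative
  of the frame, hence preserves the connection forms theta and gamma, the forms b_i and phi.\<close>

lemma frame_field_su2R5: "frame_field k (su2R5 al be y) = su2R5 al be (frame_field k y)"
  unfolding frame_field_def by (simp add: su2R5_coords vec5_eq_iff algebra_simps)

lemma frame_field_deriv_su2R5: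
  "frame_field_deriv k (su2R5 al be y) (su2R5 al be \<xi>) = su2R5 al be (frame_field_deriv k y \<xi>)"
  unfolding frame_field_deriv_def by (simp add: su2R5_coords vec5_eq_iff algebra_simps)

lemma Dframe_su2R5:
  assumes "(y$5)\<^sup>2 < 1"
  shows "Dframe k (su2R5 al be y) (su2R5 al be \<xi>) = su2R5 al be (Dframe k y \<xi>)"
  using assms
  by (simp add: Dframe_formula frame_field_su2R5 frame_field_deriv_su2R5 su2R5_add su2R5_scaleR
      frame_scale_def frame_scale_deriv_def)

context
  fixes al be :: complex
  assumes unit: "(cmod al)\<^sup>2 + (cmod be)\<^sup>2 = 1"
begin

lemma theta_su2R5:
  assumes "(y$5)\<^sup>2 < 1"
  shows "theta m k (su2R5 al be y) (su2R5 al be \<xi>) = theta m k y \<xi>"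
  by (simp add: theta_def Dframe_su2R5[OF assms] frame_su2R5 su2R5_inner[OF unit])

lemma gam_su2R5:
  assumes "(y$5)\<^sup>2 < 1"
  shows "gam j i (su2R5 al be y) (su2R5 al be \<xi>) = gam j i y \<xi>"
  by (simp add: gam_def nom_def theta_su2R5[OF assms] frame_su2R5 om_su2R5[OF unit])

lemma bform_su2R5:
  assumes "(y$5)\<^sup>2 < 1"
  shows "bform i (su2R5 al be y, a) (su2R5 al be \<xi>, \<alpha>) = bform i (y, a) (\<xi>, \<alpha>)"
  by (simp add: bform_def gam_su2R5[OF assms])

lemma piom_su2R5:
  "piom i (su2R5 al be y, a) (su2R5 al be \<xi>, \<alpha>) (su2R5 al be \<eta>, \<beta>) = piom i (y, a) (\<xi>, \<alpha>) (\<eta>, \<beta>)"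
  by (simp add: piom_def om_su2R5[OF unit])

lemma phiBS_su2R5:
  assumes "(y$5)\<^sup>2 < 1"
  shows "phiBS lam (su2R5 al be y, a) (su2R5 al be \<xi>1, \<alpha>1) (su2R5 al be \<xi>2, \<alpha>2) (su2R5 al be \<xi>3, \<alpha>3)
       = phiBS lam (y, a) (\<xi>1, \<alpha>1) (\<xi>2, \<alpha>2) (\<xi>3, \<alpha>3)"
  by (simp add: phiBS_def wedge12_def wedge111_def bform_su2R5[OF assms] piom_su2R5)

end

section \<open>The slice through the curve\<close>

definition slice_pt :: "real \<Rightarrow> real \<Rightarrow> real^5" where
  "slice_pt x1 x5 = vector [x1, 0, 0, 0, x5]"

lemma slice_pt_nth [simp]:
  "slice_pt x1 x5 $ 1 = x1" "slice_pt x1 x5 $ 2 = 0" "slice_pt x1 x5 $ 3 = 0"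
  "slice_pt x1 x5 $ 4 = 0" "slice_pt x1 x5 $ 5 = x5"
  by (simp_all add: slice_pt_def)

context
  fixes x1 x5 :: real
  assumes x1_pos: "x1 > 0" and on_sphere: "x1\<^sup>2 + x5\<^sup>2 = 1"
begin

lemma sqrt_one_minus_x5: "sqrt (1 - x5\<^sup>2) = x1"
  using x1_pos on_sphere by (metis add_diff_cancel_right' less_eq_real_def real_sqrt_unique)

lemma slice_off_poles: "(slice_pt x1 x5 $ 5)\<^sup>2 < 1"
  using x1_pos on_sphere by (simp add: add_pos_nonneg) (smt (verit) zero_less_power)

lemma one_minus_x5_sq: "1 - x5\<^sup>2 = x1\<^sup>2"
  using on_sphere by simp

text \<open>At the slice point the frame is a coordinate frame (the Suc 0 instance is the form
  in which the simplifier presents index 1).\<close>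

lemma frame_slice:
  "frame 1 (slice_pt x1 x5) = vector [0,1,0,0,0]" "frame (Suc 0) (slice_pt x1 x5) = vector [0,1,0,0,0]"
  "frame 2 (slice_pt x1 x5) = vector [0,0,1,0,0]" "frame 3 (slice_pt x1 x5) = vector [0,0,0,1,0]"
  "frame 4 (slice_pt x1 x5) = vector [-x5,0,0,0,x1]"
  using x1_pos
  by (simp_all add: frame_def sqrt_one_minus_x5 vec5_eq_iff one_minus_x5_sq)
     (simp add: power2_eq_square)

lemma su2lift_slice:
  assumes unit: "(cmod al)\<^sup>2 + (cmod be)\<^sup>2 = 1"
  shows "su2lift al be (slice_pt x1 x5, a) = (su2R5 al be (slice_pt x1 x5), a)"
proof -
  let ?y = "slice_pt x1 x5"
  have sq: "x5 * x5 + x1 * x1 = 1" using on_sphere by (simp add: power2_eq_square)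
  have frame_back: "su2R5 (cnj al) (- be) (frame k (su2R5 al be ?y)) = frame k ?y" for k
    by (simp add: frame_su2R5 su2R5_inverse[OF unit])
  have om_back: "om i (su2R5 al be ?y) (frame k (su2R5 al be ?y)) (frame l (su2R5 al be ?y))
      = om i ?y (frame k ?y) (frame l ?y)" for i k l
    by (simp add: frame_su2R5 om_su2R5[OF unit])
  have "snd (su2lift al be (?y, a)) = a"
    unfolding su2lift_def Let_def snd_conv fst_conv frame_back om_back sum_1_to_4 sum_1_to_3
    by (simp add: frame_slice om_def cof2_def cof_def inner_real5 sq vec3_eq_iff fc_def)
  then show ?thesis by (simp add: su2lift_def Let_def)
qed

lemma frame_scale_slice: "frame_scale (slice_pt x1 x5) = 1 / x1"
  by (simp add: frame_scale_def sqrt_one_minus_x5)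

lemma frame_scale_deriv_slice: "frame_scale_deriv (slice_pt x1 x5) \<xi> = x5 * \<xi>$5 / (x1 * x1\<^sup>2)"
  using x1_pos by (simp add: frame_scale_deriv_def sqrt_one_minus_x5 one_minus_x5_sq)

lemma gam_slice:
  assumes tangent: "x1 * \<xi>$1 + x5 * \<xi>$5 = 0"
  shows "gam 1 1 (slice_pt x1 x5) \<xi> = 0" "gam 2 2 (slice_pt x1 x5) \<xi> = 0"
    "gam 3 3 (slice_pt x1 x5) \<xi> = 0"
    "gam 1 2 (slice_pt x1 x5) \<xi> = - ((1 + x5) / x1 * \<xi>$2)"
    "gam 2 1 (slice_pt x1 x5) \<xi> = (1 + x5) / x1 * \<xi>$2"
    "gam 1 3 (slice_pt x1 x5) \<xi> = (1 + x5) / x1 * \<xi>$3"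
    "gam 3 1 (slice_pt x1 x5) \<xi> = - ((1 + x5) / x1 * \<xi>$3)"
    "gam 2 3 (slice_pt x1 x5) \<xi> = (1 + x5) / x1 * \<xi>$4"
    "gam 3 2 (slice_pt x1 x5) \<xi> = - ((1 + x5) / x1 * \<xi>$4)"
proof -
  have theta: "theta m k (slice_pt x1 x5) \<xi> = frame m (slice_pt x1 x5) \<bullet>
      (frame_scale (slice_pt x1 x5) *\<^sub>R frame_field_deriv k (slice_pt x1 x5) \<xi>
       + frame_scale_deriv (slice_pt x1 x5) \<xi> *\<^sub>R frame_field k (slice_pt x1 x5))" for m k
    by (simp add: theta_def Dframe_formula[OF slice_off_poles])
  have xi1: "\<xi>$1 = - (x5 * \<xi>$5) / x1" using tangent x1_pos by (simp add: field_simps)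
  have sq: "x1 * x1 + x5 * x5 = 1" "x5 * x5 + x1 * x1 = 1"
    "- (x5 * x5) - x1 * x1 = -1" "- (x1 * x1) - x5 * x5 = -1"
    using on_sphere by (simp_all add: power2_eq_square)
  show "gam 1 1 (slice_pt x1 x5) \<xi> = 0" "gam 2 2 (slice_pt x1 x5) \<xi> = 0"
    "gam 3 3 (slice_pt x1 x5) \<xi> = 0"
    "gam 1 2 (slice_pt x1 x5) \<xi> = - ((1 + x5) / x1 * \<xi>$2)"
    "gam 2 1 (slice_pt x1 x5) \<xi> = (1 + x5) / x1 * \<xi>$2"
    "gam 1 3 (slice_pt x1 x5) \<xi> = (1 + x5) / x1 * \<xi>$3"
    "gam 3 1 (slice_pt x1 x5) \<xi> = - ((1 + x5) / x1 * \<xi>$3)"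
    "gam 2 3 (slice_pt x1 x5) \<xi> = (1 + x5) / x1 * \<xi>$4"
    "gam 3 2 (slice_pt x1 x5) \<xi> = - ((1 + x5) / x1 * \<xi>$4)"
    unfolding gam_def nom_def sum_1_to_4 theta using x1_pos
    by (simp_all add: frame_slice om_def cof2_def cof_def inner_real5 frame_scale_slice
        frame_scale_deriv_slice frame_field_deriv_def frame_field_def sq xi1 one_minus_x5_sq)
       (simp_all add: field_simps power2_eq_square sq)
qed

lemma bform_slice:
  fixes p q w1 w2 w3 :: real
  assumes tangent: "x1 * p + x5 * q = 0"
  defines "\<xi> \<equiv> vector [p, x1 * w1, x1 * w2, x1 * w3, q] :: real^5"
  shows "bform 1 (slice_pt x1 x5, a) (\<xi>, \<alpha>) = \<alpha>$1 + (1 + x5) * (a$2 * w1 - a$3 * w2)"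
    "bform 2 (slice_pt x1 x5, a) (\<xi>, \<alpha>) = \<alpha>$2 + (1 + x5) * (- a$1 * w1 - a$3 * w3)"
    "bform 3 (slice_pt x1 x5, a) (\<xi>, \<alpha>) = \<alpha>$3 + (1 + x5) * (a$1 * w2 + a$2 * w3)"
proof -
  have "x1 * \<xi>$1 + x5 * \<xi>$5 = 0" using tangent by (simp add: \<xi>_def)
  note g = gam_slice[OF this] gam_slice[OF this, unfolded One_nat_def]
  have xi: "\<xi>$2 = x1 * w1" "\<xi>$3 = x1 * w2" "\<xi>$4 = x1 * w3" by (simp_all add: \<xi>_def)
  have idx: "of_nat 1 = (1::3)" "of_nat 2 = (2::3)" "of_nat 3 = (3::3)" by simp_all
  show "bform 1 (slice_pt x1 x5, a) (\<xi>, \<alpha>) = \<alpha>$1 + (1 + x5) * (a$2 * w1 - a$3 * w2)"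
    "bform 2 (slice_pt x1 x5, a) (\<xi>, \<alpha>) = \<alpha>$2 + (1 + x5) * (- a$1 * w1 - a$3 * w3)"
    "bform 3 (slice_pt x1 x5, a) (\<xi>, \<alpha>) = \<alpha>$3 + (1 + x5) * (a$1 * w2 + a$2 * w3)"
    unfolding bform_def sum_1_to_3 using x1_pos
    by (simp_all add: g fc_def idx xi) (simp_all add: field_simps)
qed

lemma cof_slice:
  "cof 1 (slice_pt x1 x5) (vector [p, x1 * w1, x1 * w2, x1 * w3, q]) = x1 * w1"
  "cof 2 (slice_pt x1 x5) (vector [p, x1 * w1, x1 * w2, x1 * w3, q]) = x1 * w2"
  "cof 3 (slice_pt x1 x5) (vector [p, x1 * w1, x1 * w2, x1 * w3, q]) = x1 * w3"
  "cof 4 (slice_pt x1 x5) (vector [p, x1 * w1, x1 * w2, x1 * w3, q]) = - x5 * p + x1 * q"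
  by (simp_all add: cof_def frame_slice inner_real5)

end

definition det3 :: "real \<Rightarrow> real \<Rightarrow> real \<Rightarrow> real \<Rightarrow> real \<Rightarrow> real \<Rightarrow> real \<Rightarrow> real \<Rightarrow> real \<Rightarrow> real" where
  "det3 a b c d e f g h i = a * (e * i - f * h) - b * (d * i - f * g) + c * (d * h - e * g)"

lemma phiBS_slice_parts:
  fixes d1 d5 tU tV tW uU1 uU2 uU3 uV1 uV2 uV3 uW1 uW2 uW3 :: real and A a :: "real^3"
  assumes x1_pos: "x1 > 0" and on_sphere: "x1\<^sup>2 + x5\<^sup>2 = 1"
    and tangent: "x1 * d1 + x5 * d5 = 0"
  defines "U \<equiv> (vector [tU * d1, x1 * uU1, x1 * uU2, x1 * uU3, tU * d5], tU *\<^sub>R A) :: tpt"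
      and "V \<equiv> (vector [tV * d1, x1 * uV1, x1 * uV2, x1 * uV3, tV * d5], tV *\<^sub>R A) :: tpt"
      and "W \<equiv> (vector [tW * d1, x1 * uW1, x1 * uW2, x1 * uW3, tW * d5], tW *\<^sub>R A) :: tpt"
      and "c \<equiv> - x5 * d1 + x1 * d5"
      and "m12 \<equiv> det3 uU1 uU2 tU uV1 uV2 tV uW1 uW2 tW"
      and "m13 \<equiv> det3 uU1 uU3 tU uV1 uV3 tV uW1 uW3 tW"
      and "m23 \<equiv> det3 uU2 uU3 tU uV2 uV3 tV uW2 uW3 tW"
  shows "(\<Sum>i\<in>{1..3}. wedge12 (bform i (slice_pt x1 x5, a)) (piom i (slice_pt x1 x5, a)) U V W)
          = x1\<^sup>2 * (A$1 * m12 + A$2 * m13 - A$3 * m23)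
            - 2 * (1 + x5) * x1 * c * (a$1 * m12 + a$2 * m13 - a$3 * m23)"
    and "wedge111 (bform 1 (slice_pt x1 x5, a)) (bform 2 (slice_pt x1 x5, a)) (bform 3 (slice_pt x1 x5, a)) U V W
          = (1 + x5)\<^sup>2 * (a$1 * A$1 + a$2 * A$2 + a$3 * A$3) * (- a$1 * m12 - a$2 * m13 + a$3 * m23)"
proof -
  have "x1 * (t * d1) + x5 * (t * d5) = 0" for t
    using tangent by (metis distrib_left mult.left_commute mult_zero_right)
  note b = bform_slice[OF x1_pos on_sphere this]
  show "(\<Sum>i\<in>{1..3}. wedge12 (bform i (slice_pt x1 x5, a)) (piom i (slice_pt x1 x5, a)) U V W)
          = x1\<^sup>2 * (A$1 * m12 + A$2 * m13 - A$3 * m23)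
            - 2 * (1 + x5) * x1 * c * (a$1 * m12 + a$2 * m13 - a$3 * m23)"
    unfolding sum_1_to_3 wedge12_def piom_def U_def V_def W_def fst_conv
    unfolding b[unfolded One_nat_def] b om_def cof2_def cof_slice[OF x1_pos on_sphere]
      c_def m12_def m13_def m23_def det3_def
    by (simp add: vector_scaleR_component) algebra
  show "wedge111 (bform 1 (slice_pt x1 x5, a)) (bform 2 (slice_pt x1 x5, a)) (bform 3 (slice_pt x1 x5, a)) U V W
          = (1 + x5)\<^sup>2 * (a$1 * A$1 + a$2 * A$2 + a$3 * A$3) * (- a$1 * m12 - a$2 * m13 + a$3 * m23)"
    unfolding wedge111_def U_def V_def W_def b m12_def m13_def m23_def det3_def
    by (simp add: vector_scaleR_component) algebra
qed

section \<open>Velocities of curves in the orbit\<close>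

lemma su2R5_slice:
  "su2R5 al be (slice_pt x1 x5) = vector [Re al * x1, Im al * x1, Re be * x1, Im be * x1, x5]"
  by (simp add: su2R5_coords vec5_eq_iff)

lemma lifted_curve_has_derivative:
  fixes x1f x5f a1f a2f a3f \<tau> :: "real \<Rightarrow> real" and ga gb :: "real \<Rightarrow> complex"
  assumes "ga 0 = al" "gb 0 = be" "\<tau> 0 = t"
    and dA: "(ga has_vector_derivative A) (at 0)" and dB: "(gb has_vector_derivative B) (at 0)"
    and dt: "(\<tau> has_real_derivative \<tau>d) (at 0)"
    and d1: "(x1f has_real_derivative d1) (at t)" and d5: "(x5f has_real_derivative d5) (at t)"
    and e1: "(a1f has_real_derivative e1) (at t)" and e2: "(a2f has_real_derivative e2) (at t)"
    and e3: "(a3f has_real_derivative e3) (at t)"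
    and on_slice: "\<forall>s. x1f (\<tau> s) > 0 \<and> (x1f (\<tau> s))\<^sup>2 + (x5f (\<tau> s))\<^sup>2 = 1"
    and unit: "\<forall>s. (cmod (ga s))\<^sup>2 + (cmod (gb s))\<^sup>2 = 1"
  shows "((\<lambda>s. su2lift (ga s) (gb s) (vector [x1f (\<tau> s), 0, 0, 0, x5f (\<tau> s)],
                                         vector [a1f (\<tau> s), a2f (\<tau> s), a3f (\<tau> s)]))
     has_vector_derivative
      (vector [Re A * x1f t + Re al * (d1 * \<tau>d), Im A * x1f t + Im al * (d1 * \<tau>d),
               Re B * x1f t + Re be * (d1 * \<tau>d), Im B * x1f t + Im be * (d1 * \<tau>d), d5 * \<tau>d],
       vector [e1 * \<tau>d, e2 * \<tau>d, e3 * \<tau>d])) (at 0)"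
proof -
  have curve: "(\<lambda>s. su2lift (ga s) (gb s) (vector [x1f (\<tau> s), 0, 0, 0, x5f (\<tau> s)],
                                         vector [a1f (\<tau> s), a2f (\<tau> s), a3f (\<tau> s)]))
    = (\<lambda>s. (vector [Re (ga s) * x1f (\<tau> s), Im (ga s) * x1f (\<tau> s), Re (gb s) * x1f (\<tau> s),
                    Im (gb s) * x1f (\<tau> s), x5f (\<tau> s)],
             vector [a1f (\<tau> s), a2f (\<tau> s), a3f (\<tau> s)]))"
    using on_slice unit su2lift_slice by (simp add: fun_eq_iff su2R5_slice flip: slice_pt_def)
  have chain: "((\<lambda>s. f (\<tau> s)) has_real_derivative d * \<tau>d) (at 0)"
    if "(f has_real_derivative d) (at t)" for f d
    using DERIV_chain2[OF _ dt, of f d] that assms(3) by simp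
  have "((\<lambda>s. (vector [Re (ga s) * x1f (\<tau> s), Im (ga s) * x1f (\<tau> s), Re (gb s) * x1f (\<tau> s),
                    Im (gb s) * x1f (\<tau> s), x5f (\<tau> s)] :: real^5,
             vector [a1f (\<tau> s), a2f (\<tau> s), a3f (\<tau> s)] :: real^3)) has_vector_derivative
       (vector [Re A * x1f (\<tau> 0) + d1 * \<tau>d * Re (ga 0), Im A * x1f (\<tau> 0) + d1 * \<tau>d * Im (ga 0),
                Re B * x1f (\<tau> 0) + d1 * \<tau>d * Re (gb 0), Im B * x1f (\<tau> 0) + d1 * \<tau>d * Im (gb 0),
                d5 * \<tau>d],
        vector [e1 * \<tau>d, e2 * \<tau>d, e3 * \<tau>d])) (at 0)"
    by (intro has_vector_derivative_Pair vector5_has_vector_derivative vector3_has_vector_derivative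
          DERIV_mult has_field_derivative_Re[OF dA] has_field_derivative_Im[OF dA]
          has_field_derivative_Re[OF dB] has_field_derivative_Im[OF dB] chain d1 d5 e1 e2 e3)
  then show ?thesis unfolding curve using assms(1,2,3) by (simp add: algebra_simps)
qed

lemma unit_sphere_tangent:
  fixes ga gb :: "real \<Rightarrow> complex"
  assumes "ga 0 = al" "gb 0 = be"
    and dA: "(ga has_vector_derivative A) (at 0)" and dB: "(gb has_vector_derivative B) (at 0)"
    and unit: "\<forall>s. (cmod (ga s))\<^sup>2 + (cmod (gb s))\<^sup>2 = 1"
  shows "Re al * Re A + Im al * Im A + Re be * Re B + Im be * Im B = 0"
proof -
  have "((\<lambda>s. Re (ga s) * Re (ga s) + Im (ga s) * Im (ga s) + Re (gb s) * Re (gb s) + Im (gb s) * Im (gb s))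
     has_real_derivative
     (Re A * Re (ga 0) + Re A * Re (ga 0) + (Im A * Im (ga 0) + Im A * Im (ga 0))
      + (Re B * Re (gb 0) + Re B * Re (gb 0)) + (Im B * Im (gb 0) + Im B * Im (gb 0)))) (at 0)"
    by (intro DERIV_add DERIV_mult has_field_derivative_Re[OF dA] has_field_derivative_Im[OF dA]
        has_field_derivative_Re[OF dB] has_field_derivative_Im[OF dB])
  moreover have "Re (ga s) * Re (ga s) + Im (ga s) * Im (ga s) + Re (gb s) * Re (gb s) + Im (gb s) * Im (gb s) = 1"
    for s using unit unfolding cmod_power2 by (simp add: power2_eq_square add.assoc)
  ultimately have "((\<lambda>s. 1) has_real_derivative
     (Re A * Re (ga 0) + Re A * Re (ga 0) + (Im A * Im (ga 0) + Im A * Im (ga 0))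
      + (Re B * Re (gb 0) + Re B * Re (gb 0)) + (Im B * Im (gb 0) + Im B * Im (gb 0)))) (at 0)"
    by simp
  then have "Re A * Re (ga 0) + Re A * Re (ga 0) + (Im A * Im (ga 0) + Im A * Im (ga 0))
      + (Re B * Re (gb 0) + Re B * Re (gb 0)) + (Im B * Im (gb 0) + Im B * Im (gb 0)) = 0"
    using DERIV_unique[OF _ DERIV_const] by blast
  then show ?thesis using assms(1,2) by (simp add: algebra_simps)
qed

text \<open>Pulling a velocity back by g: the rotation part is given by the three components of
  the Lie algebra element g^{-1} g' of su(2).\<close>

lemma su2R5_tangent_decomp:
  assumes unit: "(cmod al)\<^sup>2 + (cmod be)\<^sup>2 = 1"
    and orth: "Re al * Re A + Im al * Im A + Re be * Re B + Im be * Im B = 0"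
  shows "vector [Re A * x1 + Re al * p, Im A * x1 + Im al * p,
               Re B * x1 + Re be * p, Im B * x1 + Im be * p, q]
    = su2R5 al be (vector [p, x1 * Im (cnj al * A + cnj be * B), x1 * Re (al * B - be * A),
                           x1 * Im (al * B - be * A), q])"
proof -
  have n: "(Re al)\<^sup>2 + (Im al)\<^sup>2 + (Re be)\<^sup>2 + (Im be)\<^sup>2 = 1" using su2_unit_coords[OF unit] .
  show ?thesis by (simp add: su2R5_coords vec5_eq_iff) (use n orth in algebra)
qed

section \<open>The coefficients of phi on the orbit\<close>

text \<open>On the orbit, phi(U,V,W) is a combination of three minors; orbit_coeff is the
  coefficient of the i-th minor, with s = s_lambda, c the speed of the base curve along
  the great circle, a the fibre point and A its velocity.\<close>

definition orbit_coeff :: "real \<Rightarrow> real \<Rightarrow> real \<Rightarrow> real \<Rightarrow> real^3 \<Rightarrow> real^3 \<Rightarrow> 3 \<Rightarrow> real" where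
  "orbit_coeff s x1 x5 c a A i = 2 * s * (x1\<^sup>2 * A$i - 2 * (1 + x5) * x1 * c * a$i)
      - (1 / s ^ 3) * ((1 + x5)\<^sup>2 * (a$1 * A$1 + a$2 * A$2 + a$3 * A$3) * a$i)"

lemma rsq_vector: "rsq (vector [b1, b2, b3]) = b1\<^sup>2 + b2\<^sup>2 + b3\<^sup>2"
  unfolding rsq_def sum_1_to_3 fc_def by simp

lemma rsq_nonneg: "rsq a \<ge> 0"
  by (simp add: rsq_def sum_nonneg)

lemma slam_pos: "lam > 0 \<Longrightarrow> slam lam a > 0"
  using rsq_nonneg[of a] by (simp add: slam_def)

lemma slam_pow4:
  assumes "lam > 0"
  shows "slam lam a ^ 4 = lam + rsq a"
proof -
  have pos: "lam + rsq a > 0" using assms rsq_nonneg[of a] by linarith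
  have "slam lam a ^ 4 = slam lam a powr (real 4)"
    by (simp only: powr_realpow[OF slam_pos[OF assms]])
  also have "\<dots> = lam + rsq a" using pos by (simp add: slam_def powr_powr)
  finally show ?thesis .
qed

text \<open>Multiplying the coefficient by s^3 produces the left-hand side of the ODE, times a
  positive factor; here L = s^4 = lambda + r^2 and P = <a, A>.\<close>

lemma orbit_coeff_rescaled:
  fixes s L x1 x5 d1 d5 Ai ai P :: real
  assumes s_pos: "s > 0" and L: "L = s^4" and x5_pos: "1 + x5 > 0" and on_sphere: "x1\<^sup>2 + x5\<^sup>2 = 1"
    and tangent: "x1 * d1 + x5 * d5 = 0"
  shows "s^3 * (2 * s * (x1\<^sup>2 * Ai - 2 * (1 + x5) * x1 * (- x5 * d1 + x1 * d5) * ai)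
                - 1 / s^3 * ((1 + x5)\<^sup>2 * P * ai))
     = (4 * Ai * ((1 - x5) / (1 + x5)) - ai * (2 * P / L + 8 * d5 / (1 + x5))) * (L * (1 + x5)\<^sup>2 / 2)"
proof -
  have c: "x1 * (- x5 * d1 + x1 * d5) = d5" using tangent on_sphere by algebra
  have x1sq: "x1\<^sup>2 = (1 - x5) * (1 + x5)" using on_sphere by algebra
  have "L \<noteq> 0" "1 + x5 \<noteq> 0" using s_pos L x5_pos by simp_all
  then have t1: "4 * Ai * ((1 - x5) / (1 + x5)) * (L * (1 + x5)\<^sup>2 / 2) = 2 * L * (1 - x5) * (1 + x5) * Ai"
    and t2: "2 * P / L * (L * (1 + x5)\<^sup>2 / 2) = (1 + x5)\<^sup>2 * P"
    and t3: "8 * d5 / (1 + x5) * (L * (1 + x5)\<^sup>2 / 2) = 4 * L * (1 + x5) * d5"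
    by (simp_all add: field_simps power2_eq_square)
  have "s^3 * (2 * s * (x1\<^sup>2 * Ai - 2 * (1 + x5) * x1 * (- x5 * d1 + x1 * d5) * ai) - r * ((1 + x5)\<^sup>2 * P * ai))
      = 2 * L * (1 - x5) * (1 + x5) * Ai - ai * ((1 + x5)\<^sup>2 * P + 4 * L * (1 + x5) * d5)"
    if "s^3 * r = 1" for r
    using that c x1sq L by algebra
  moreover have "s^3 * (1 / s^3) = 1" using s_pos by simp
  ultimately have "s^3 * (2 * s * (x1\<^sup>2 * Ai - 2 * (1 + x5) * x1 * (- x5 * d1 + x1 * d5) * ai)
                - 1 / s^3 * ((1 + x5)\<^sup>2 * P * ai))
      = 4 * Ai * ((1 - x5) / (1 + x5)) * (L * (1 + x5)\<^sup>2 / 2)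
        - ai * (2 * P / L * (L * (1 + x5)\<^sup>2 / 2) + 8 * d5 / (1 + x5) * (L * (1 + x5)\<^sup>2 / 2))"
    unfolding t1 t2 t3 by blast
  also have "\<dots> = (4 * Ai * ((1 - x5) / (1 + x5)) - ai * (2 * P / L + 8 * d5 / (1 + x5)))
      * (L * (1 + x5)\<^sup>2 / 2)"
    by (simp only: left_diff_distrib distrib_right mult.assoc)
  finally show ?thesis .
qed

lemma orbit_coeff_eq_0_iff:
  assumes lam: "lam > 0" and x5_pos: "1 + x5 > 0" and on_sphere: "x1\<^sup>2 + x5\<^sup>2 = 1"
    and tangent: "x1 * d1 + x5 * d5 = 0"
  shows "orbit_coeff (slam lam a) x1 x5 (- x5 * d1 + x1 * d5) a A i = 0 \<longleftrightarrow>
    4 * A$i * ((1 - x5) / (1 + x5))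
      - a$i * (2 * (a$1 * A$1 + a$2 * A$2 + a$3 * A$3) / (lam + rsq a) + 8 * d5 / (1 + x5)) = 0"
proof -
  let ?s = "slam lam a" and ?L = "lam + rsq a"
  have s_pos: "?s > 0" using slam_pos[OF lam] .
  have L_pos: "?L > 0" using lam rsq_nonneg[of a] by linarith
  have "?s^3 * orbit_coeff ?s x1 x5 (- x5 * d1 + x1 * d5) a A i
      = (4 * A$i * ((1 - x5) / (1 + x5))
          - a$i * (2 * (a$1 * A$1 + a$2 * A$2 + a$3 * A$3) / ?L + 8 * d5 / (1 + x5)))
        * (?L * (1 + x5)\<^sup>2 / 2)"
    unfolding orbit_coeff_def
    by (rule orbit_coeff_rescaled[OF s_pos slam_pow4[OF lam, symmetric] x5_pos on_sphere tangent])
  moreover have "?s^3 \<noteq> 0" "?L * (1 + x5)\<^sup>2 / 2 \<noteq> 0" using s_pos L_pos x5_pos by simp_all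
  ultimately show ?thesis by (metis mult_eq_0_iff)
qed

lemma log_potential_has_derivative:
  fixes a1 a2 a3 x5 :: "real \<Rightarrow> real"
  assumes d1: "(a1 has_real_derivative e1) (at t)" and d2: "(a2 has_real_derivative e2) (at t)"
    and d3: "(a3 has_real_derivative e3) (at t)" and d5: "(x5 has_real_derivative e5) (at t)"
    and L_pos: "lam + ((a1 t)\<^sup>2 + (a2 t)\<^sup>2 + (a3 t)\<^sup>2) > 0" and x5_pos: "1 + x5 t > 0"
  shows "((\<lambda>s. ln (lam + ((a1 s)\<^sup>2 + (a2 s)\<^sup>2 + (a3 s)\<^sup>2)) + 8 * ln (1 + x5 s)) has_real_derivative
    2 * (a1 t * e1 + a2 t * e2 + a3 t * e3) / (lam + ((a1 t)\<^sup>2 + (a2 t)\<^sup>2 + (a3 t)\<^sup>2))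
      + 8 * e5 / (1 + x5 t)) (at t)"
  using L_pos x5_pos
  by (auto intro!: derivative_eq_intros d1 d2 d3 d5 simp: field_simps power2_eq_square)

text \<open>Smoothness enters only through differentiability at the points of I.\<close>

lemma smooth_on_has_derivative: "smooth_on I f \<Longrightarrow> t \<in> I \<Longrightarrow> (f has_real_derivative deriv f t) (at t)"
  unfolding smooth_on_def by (metis DERIV_deriv_iff_real_differentiable funpow_0)

context
  fixes lam :: real and I :: "real set" and x1 x5 a1 a2 a3 :: "real \<Rightarrow> real"
  assumes lam_pos: "lam > 0" and I_open: "open I"
    and d_x1: "\<And>t. t \<in> I \<Longrightarrow> (x1 has_real_derivative deriv x1 t) (at t)"
    and d_x5: "\<And>t. t \<in> I \<Longrightarrow> (x5 has_real_derivative deriv x5 t) (at t)"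
    and d_a1: "\<And>t. t \<in> I \<Longrightarrow> (a1 has_real_derivative deriv a1 t) (at t)"
    and d_a2: "\<And>t. t \<in> I \<Longrightarrow> (a2 has_real_derivative deriv a2 t) (at t)"
    and d_a3: "\<And>t. t \<in> I \<Longrightarrow> (a3 has_real_derivative deriv a3 t) (at t)"
    and on_slice: "\<forall>t\<in>I. x1 t > 0 \<and> (x1 t)\<^sup>2 + (x5 t)\<^sup>2 = 1"
begin

text \<open>The map SU(2) x I \<rightarrow> total space parametrising the orbit, the candidate tangent
  vectors g.(tau c'(t) + rotation (w1, w2, w3)), the coefficients Q t i of phi on them, and
  the ODE system of the theorem.\<close>

abbreviation orbit_map :: "complex \<Rightarrow> complex \<Rightarrow> real \<Rightarrow> tpt" where
  "orbit_map \<equiv> (\<lambda>al be t. su2lift al be (vector [x1 t, 0, 0, 0, x5 t], vector [a1 t, a2 t, a3 t]))"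

abbreviation orbit_vec :: "complex \<Rightarrow> complex \<Rightarrow> real \<Rightarrow> real \<Rightarrow> real \<Rightarrow> real \<Rightarrow> real \<Rightarrow> tpt" where
  "orbit_vec al be t w1 w2 w3 \<tau> \<equiv>
     (su2R5 al be (vector [\<tau> * deriv x1 t, x1 t * w1, x1 t * w2, x1 t * w3, \<tau> * deriv x5 t]),
      \<tau> *\<^sub>R vector [deriv a1 t, deriv a2 t, deriv a3 t])"

abbreviation Q :: "real \<Rightarrow> 3 \<Rightarrow> real" where
  "Q t i \<equiv> orbit_coeff (slam lam (vector [a1 t, a2 t, a3 t])) (x1 t) (x5 t)
     (- x5 t * deriv x1 t + x1 t * deriv x5 t) (vector [a1 t, a2 t, a3 t])
     (vector [deriv a1 t, deriv a2 t, deriv a3 t]) i"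

abbreviation orbit_ODE :: "real \<Rightarrow> bool" where
  "orbit_ODE t \<equiv> (\<forall>a\<in>{a1, a2, a3}.
     4 * deriv a t * ((1 - x5 t) / (1 + x5 t))
     - a t * deriv (\<lambda>s. ln (lam + ((a1 s)\<^sup>2 + (a2 s)\<^sup>2 + (a3 s)\<^sup>2)) + 8 * ln (1 + x5 s)) t = 0)"

lemma one_plus_x5_pos: "t \<in> I \<Longrightarrow> 1 + x5 t > 0"
proof -
  assume "t \<in> I"
  then have "x1 t > 0" "(x1 t)\<^sup>2 + (x5 t)\<^sup>2 = 1" using on_slice by auto
  then have "(x5 t)\<^sup>2 < 1" by (smt (verit) zero_less_power)
  then show ?thesis by (simp add: abs_square_less_1)
qed

lemma tangent_constraint:
  assumes t: "t \<in> I"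
  shows "x1 t * deriv x1 t + x5 t * deriv x5 t = 0"
proof -
  have "((\<lambda>s. x1 s * x1 s + x5 s * x5 s) has_real_derivative
      (deriv x1 t * x1 t + deriv x1 t * x1 t + (deriv x5 t * x5 t + deriv x5 t * x5 t))) (at t)"
    by (intro DERIV_add DERIV_mult d_x1 d_x5 t)
  moreover have "((\<lambda>s. x1 s * x1 s + x5 s * x5 s) has_real_derivative 0) (at t)"
  proof (rule has_field_derivative_transform_within_open[OF DERIV_const I_open t])
    fix s assume "s \<in> I"
    then show "1 = x1 s * x1 s + x5 s * x5 s" using on_slice by (simp add: power2_eq_square)
  qed
  ultimately have "deriv x1 t * x1 t + deriv x1 t * x1 t + (deriv x5 t * x5 t + deriv x5 t * x5 t) = 0"
    using DERIV_unique by blast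
  then show ?thesis by (simp add: algebra_simps)
qed

lemma orbit_curve_has_derivative:
  fixes ga gb :: "real \<Rightarrow> complex" and \<tau> :: "real \<Rightarrow> real"
  assumes t: "t \<in> I" and start: "ga 0 = al" "gb 0 = be" "\<tau> 0 = t"
    and curve: "\<forall>s. (cmod (ga s))\<^sup>2 + (cmod (gb s))\<^sup>2 = 1 \<and> \<tau> s \<in> I"
    and dA: "(ga has_vector_derivative A) (at 0)" and dB: "(gb has_vector_derivative B) (at 0)"
    and d\<tau>: "(\<tau> has_real_derivative \<tau>d) (at 0)"
  shows "((\<lambda>s. orbit_map (ga s) (gb s) (\<tau> s)) has_vector_derivative
      orbit_vec al be t (Im (cnj al * A + cnj be * B)) (Re (al * B - be * A)) (Im (al * B - be * A)) \<tau>d)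
     (at 0)"
proof -
  have unit: "(cmod al)\<^sup>2 + (cmod be)\<^sup>2 = 1" using curve start by metis
  have orth: "Re al * Re A + Im al * Im A + Re be * Re B + Im be * Im B = 0"
    using unit_sphere_tangent[OF start(1,2) dA dB] curve by blast
  have fibre: "(vector [deriv a1 t * \<tau>d, deriv a2 t * \<tau>d, deriv a3 t * \<tau>d] :: real^3)
      = \<tau>d *\<^sub>R vector [deriv a1 t, deriv a2 t, deriv a3 t]"
    by (simp add: vec3_eq_iff)
  have "\<forall>s. x1 (\<tau> s) > 0 \<and> (x1 (\<tau> s))\<^sup>2 + (x5 (\<tau> s))\<^sup>2 = 1" using curve on_slice by blast
  from lifted_curve_has_derivative[OF start dA dB d\<tau> d_x1[OF t] d_x5[OF t] d_a1[OF t] d_a2[OF t]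
      d_a3[OF t] this] curve
  show ?thesis
    unfolding su2R5_tangent_decomp[OF unit orth, of "x1 t" "deriv x1 t * \<tau>d" "deriv x5 t * \<tau>d"] fibre
    by (simp add: mult.commute)
qed

lemma orbit_tangent_form:
  assumes t: "t \<in> I" and U: "U \<in> tanvecs orbit_map I al be t"
  shows "\<exists>w1 w2 w3 \<tau>. U = orbit_vec al be t w1 w2 w3 \<tau>"
proof -
  obtain ga gb \<tau> where g: "ga 0 = al" "gb 0 = be" "\<tau> 0 = t"
     "\<forall>s. (cmod (ga s))\<^sup>2 + (cmod (gb s))\<^sup>2 = 1 \<and> \<tau> s \<in> I"
     "ga differentiable (at 0)" "gb differentiable (at 0)" "\<tau> differentiable (at 0)"
     "((\<lambda>s. orbit_map (ga s) (gb s) (\<tau> s)) has_vector_derivative U) (at 0)"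
    using U unfolding tanvecs_def by blast
  have dA: "(ga has_vector_derivative vector_derivative ga (at 0)) (at 0)"
    using g(5) vector_derivative_works by blast
  have dB: "(gb has_vector_derivative vector_derivative gb (at 0)) (at 0)"
    using g(6) vector_derivative_works by blast
  have d\<tau>: "(\<tau> has_real_derivative deriv \<tau> 0) (at 0)"
    using g(7) DERIV_deriv_iff_real_differentiable by blast
  from vector_derivative_unique_at[OF g(8) orbit_curve_has_derivative[OF t g(1-4) dA dB d\<tau>]]
  show ?thesis by blast
qed

lemma orbit_tangent_mem:
  fixes ga gb :: "real \<Rightarrow> complex" and \<tau> :: "real \<Rightarrow> real"
  assumes t: "t \<in> I" and start: "ga 0 = al" "gb 0 = be" "\<tau> 0 = t"
    and curve: "\<forall>s. (cmod (ga s))\<^sup>2 + (cmod (gb s))\<^sup>2 = 1 \<and> \<tau> s \<in> I"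
    and dA: "(ga has_vector_derivative A) (at 0)" and dB: "(gb has_vector_derivative B) (at 0)"
    and d\<tau>: "(\<tau> has_real_derivative \<tau>d) (at 0)"
  shows "orbit_vec al be t (Im (cnj al * A + cnj be * B)) (Re (al * B - be * A)) (Im (al * B - be * A)) \<tau>d
      \<in> tanvecs orbit_map I al be t"
  unfolding tanvecs_def
  using start curve orbit_curve_has_derivative[OF t start curve dA dB d\<tau>]
    differentiableI_vector[OF dA] differentiableI_vector[OF dB] d\<tau> real_differentiable_def
  by blast

text \<open>phi on three tangent vectors of the orbit: by invariance it is evaluated at the slice
  point, where it reduces to a combination of minors with the coefficients Q t i.\<close>

lemma phiBS_orbit:
  assumes t: "t \<in> I" and unit: "(cmod al)\<^sup>2 + (cmod be)\<^sup>2 = 1"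
  shows "phiBS lam (orbit_map al be t) (orbit_vec al be t uU1 uU2 uU3 tU)
           (orbit_vec al be t uV1 uV2 uV3 tV) (orbit_vec al be t uW1 uW2 uW3 tW)
   = Q t 1 * det3 uU1 uU2 tU uV1 uV2 tV uW1 uW2 tW
     + Q t 2 * det3 uU1 uU3 tU uV1 uV3 tV uW1 uW3 tW
     - Q t 3 * det3 uU2 uU3 tU uV2 uV3 tV uW2 uW3 tW"
proof -
  have x1_pos: "x1 t > 0" and on_sphere: "(x1 t)\<^sup>2 + (x5 t)\<^sup>2 = 1" using on_slice t by auto
  have base: "orbit_map al be t = (su2R5 al be (slice_pt (x1 t) (x5 t)), vector [a1 t, a2 t, a3 t])"
    using su2lift_slice[OF x1_pos on_sphere unit] by (simp add: slice_pt_def)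
  note parts = phiBS_slice_parts[OF x1_pos on_sphere tangent_constraint[OF t]]
  show ?thesis
    unfolding base phiBS_su2R5[OF unit slice_off_poles[OF x1_pos on_sphere]]
    unfolding phiBS_def snd_conv parts orbit_coeff_def
    by (simp add: algebra_simps)
qed

lemma log_potential_deriv:
  assumes t: "t \<in> I"
  shows "deriv (\<lambda>s. ln (lam + ((a1 s)\<^sup>2 + (a2 s)\<^sup>2 + (a3 s)\<^sup>2)) + 8 * ln (1 + x5 s)) t
    = 2 * (a1 t * deriv a1 t + a2 t * deriv a2 t + a3 t * deriv a3 t)
        / (lam + rsq (vector [a1 t, a2 t, a3 t])) + 8 * deriv x5 t / (1 + x5 t)"
proof -
  have "lam + ((a1 t)\<^sup>2 + (a2 t)\<^sup>2 + (a3 t)\<^sup>2) > 0" using lam_pos by (simp add: add_pos_nonneg)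
  from log_potential_has_derivative[OF d_a1[OF t] d_a2[OF t] d_a3[OF t] d_x5[OF t] this
      one_plus_x5_pos[OF t]]
  show ?thesis unfolding rsq_vector by (rule DERIV_imp_deriv)
qed

lemma orbit_ODE_iff_Q: "t \<in> I \<Longrightarrow> orbit_ODE t \<longleftrightarrow> Q t 1 = 0 \<and> Q t 2 = 0 \<and> Q t 3 = 0"
proof -
  assume t: "t \<in> I"
  have on_sphere: "(x1 t)\<^sup>2 + (x5 t)\<^sup>2 = 1" using on_slice t by auto
  note iff = orbit_coeff_eq_0_iff[OF lam_pos one_plus_x5_pos[OF t] on_sphere tangent_constraint[OF t]]
  show ?thesis unfolding iff log_potential_deriv[OF t] by (simp add: algebra_simps)
qed

lemma phi_vanishes_if_ODE:
  assumes ODE: "\<forall>t\<in>I. orbit_ODE t"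
  shows "phi_vanishes_on_orbit lam I (\<lambda>t. (vector [x1 t, 0, 0, 0, x5 t], vector [a1 t, a2 t, a3 t]))"
  unfolding phi_vanishes_on_orbit_def Let_def
proof (intro ballI allI impI)
  fix t al be U V W
  assume t: "t \<in> I" and unit: "(cmod al)\<^sup>2 + (cmod be)\<^sup>2 = 1"
    and "U \<in> tanvecs orbit_map I al be t" "V \<in> tanvecs orbit_map I al be t"
      "W \<in> tanvecs orbit_map I al be t"
  then obtain uU1 uU2 uU3 tU uV1 uV2 uV3 tV uW1 uW2 uW3 tW where
    "U = orbit_vec al be t uU1 uU2 uU3 tU" "V = orbit_vec al be t uV1 uV2 uV3 tV"
    "W = orbit_vec al be t uW1 uW2 uW3 tW"
    using orbit_tangent_form by meson
  moreover have "Q t 1 = 0" "Q t 2 = 0" "Q t 3 = 0" using orbit_ODE_iff_Q[OF t] ODE t by auto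
  ultimately show "phiBS lam (orbit_map al be t) U V W = 0"
    by (simp add: phiBS_orbit[OF t unit])
qed

text \<open>Conversely, at g = 1 the orbit contains the three infinitesimal rotations and a
  multiple of c'(t); on these test vectors phi picks out the single coefficients Q t i.\<close>

lemma orbit_test_vectors:
  assumes t: "t \<in> I"
  obtains \<epsilon> where "\<epsilon> > 0"
    "orbit_vec 1 0 t 1 0 0 0 \<in> tanvecs orbit_map I 1 0 t"
    "orbit_vec 1 0 t 0 1 0 0 \<in> tanvecs orbit_map I 1 0 t"
    "orbit_vec 1 0 t 0 0 1 0 \<in> tanvecs orbit_map I 1 0 t"
    "orbit_vec 1 0 t 0 0 0 \<epsilon> \<in> tanvecs orbit_map I 1 0 t"
proof -
  obtain e where e: "e > 0" "ball t e \<subseteq> I" using I_open t open_contains_ball by blast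
  define \<epsilon> where "\<epsilon> = e / 2"
  have \<epsilon>: "\<epsilon> > 0" "\<epsilon> < e" using e by (simp_all add: \<epsilon>_def)
  have in_I: "t + \<epsilon> * sin s \<in> I" for s
  proof -
    have "\<bar>\<epsilon> * sin s\<bar> \<le> \<epsilon>" using \<epsilon> by (simp add: abs_mult mult_left_le)
    then have "dist t (t + \<epsilon> * sin s) < e" using \<epsilon> by (simp add: dist_real_def)
    then show ?thesis using e by auto
  qed
  have rot1: "((\<lambda>s. Complex (cos s) (sin s)) has_vector_derivative \<i>) (at 0)"
    and rot2: "((\<lambda>s. Complex (cos s) 0) has_vector_derivative 0) (at 0)"
    and rot3: "((\<lambda>s. Complex (sin s) 0) has_vector_derivative 1) (at 0)"
    and rot4: "((\<lambda>s. Complex 0 (sin s)) has_vector_derivative \<i>) (at 0)"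
    by (simp_all add: has_vector_derivative_complex_iff) (auto intro!: derivative_eq_intros)
  have still: "((\<lambda>s. 0::complex) has_vector_derivative 0) (at 0)"
    "((\<lambda>s. 1::complex) has_vector_derivative 0) (at 0)" by simp_all
  have move: "((\<lambda>s. t + \<epsilon> * sin s) has_real_derivative \<epsilon>) (at 0)"
    by (auto intro!: derivative_eq_intros)
  have unit_curves: "\<forall>s. (cmod (Complex (cos s) (sin s)))\<^sup>2 + (cmod (0::complex))\<^sup>2 = 1 \<and> t \<in> I"
    "\<forall>s. (cmod (Complex (cos s) 0))\<^sup>2 + (cmod (Complex (sin s) 0))\<^sup>2 = 1 \<and> t \<in> I"
    "\<forall>s. (cmod (Complex (cos s) 0))\<^sup>2 + (cmod (Complex 0 (sin s)))\<^sup>2 = 1 \<and> t \<in> I"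
    "\<forall>s. (cmod (1::complex))\<^sup>2 + (cmod (0::complex))\<^sup>2 = 1 \<and> t + \<epsilon> * sin s \<in> I"
    using t in_I by (simp_all add: cmod_power2)
  show ?thesis
  proof (rule that[OF \<epsilon>(1)])
    show "orbit_vec 1 0 t 1 0 0 0 \<in> tanvecs orbit_map I 1 0 t"
      using orbit_tangent_mem[OF t _ _ _ unit_curves(1) rot1 still(1) DERIV_const] by (simp add: complex_eq_iff)
    show "orbit_vec 1 0 t 0 1 0 0 \<in> tanvecs orbit_map I 1 0 t"
      using orbit_tangent_mem[OF t _ _ _ unit_curves(2) rot2 rot3 DERIV_const] by (simp add: complex_eq_iff)
    show "orbit_vec 1 0 t 0 0 1 0 \<in> tanvecs orbit_map I 1 0 t"
      using orbit_tangent_mem[OF t _ _ _ unit_curves(3) rot2 rot4 DERIV_const] by (simp add: complex_eq_iff)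
    show "orbit_vec 1 0 t 0 0 0 \<epsilon> \<in> tanvecs orbit_map I 1 0 t"
      using orbit_tangent_mem[OF t _ _ _ unit_curves(4) still(2) still(1) move] by (simp add: complex_eq_iff)
  qed
qed

lemma ODE_if_phi_vanishes:
  assumes vanish: "phi_vanishes_on_orbit lam I (\<lambda>t. (vector [x1 t, 0, 0, 0, x5 t], vector [a1 t, a2 t, a3 t]))"
    and t: "t \<in> I"
  shows "orbit_ODE t"
proof -
  have unit: "(cmod (1::complex))\<^sup>2 + (cmod (0::complex))\<^sup>2 = 1" by simp
  have zero: "phiBS lam (orbit_map 1 0 t) U V W = 0"
    if "U \<in> tanvecs orbit_map I 1 0 t" "V \<in> tanvecs orbit_map I 1 0 t" "W \<in> tanvecs orbit_map I 1 0 t"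
    for U V W using vanish t unit that unfolding phi_vanishes_on_orbit_def Let_def by blast
  obtain \<epsilon> where \<epsilon>: "\<epsilon> > 0"
    and R1: "orbit_vec 1 0 t 1 0 0 0 \<in> tanvecs orbit_map I 1 0 t"
    and R2: "orbit_vec 1 0 t 0 1 0 0 \<in> tanvecs orbit_map I 1 0 t"
    and R3: "orbit_vec 1 0 t 0 0 1 0 \<in> tanvecs orbit_map I 1 0 t"
    and T: "orbit_vec 1 0 t 0 0 0 \<epsilon> \<in> tanvecs orbit_map I 1 0 t"
    using orbit_test_vectors[OF t] by blast
  have "Q t 1 * \<epsilon> = 0"
    using zero[OF R1 R2 T] unfolding phiBS_orbit[OF t unit] by (simp add: det3_def)
  moreover have "Q t 2 * \<epsilon> = 0"
    using zero[OF R1 R3 T] unfolding phiBS_orbit[OF t unit] by (simp add: det3_def)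
  moreover have "Q t 3 * \<epsilon> = 0"
    using zero[OF R2 R3 T] unfolding phiBS_orbit[OF t unit] by (simp add: det3_def)
  ultimately show ?thesis using orbit_ODE_iff_Q[OF t] \<epsilon> by simp
qed

end

theorem mainTheorem4:
  fixes lam :: real and I :: "real set"
    and x1 x5 a1 a2 a3 :: "real \<Rightarrow> real"
  assumes "lam > 0"
    and "open I" and "is_interval I"
    and "smooth_on I x1" and "smooth_on I x5"
    and "smooth_on I a1" and "smooth_on I a2" and "smooth_on I a3"
    and "\<forall>t\<in>I. x1 t > 0 \<and> (x1 t)\<^sup>2 + (x5 t)\<^sup>2 = 1"
  shows "phi_vanishes_on_orbit lam I
           (\<lambda>t. (vector [x1 t, 0, 0, 0, x5 t], vector [a1 t, a2 t, a3 t]))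
         \<longleftrightarrow>
         (\<forall>t\<in>I. \<forall>a\<in>{a1, a2, a3}.
            4 * deriv a t * ((1 - x5 t) / (1 + x5 t))
            - a t * deriv (\<lambda>s. ln (lam + ((a1 s)\<^sup>2 + (a2 s)\<^sup>2 + (a3 s)\<^sup>2)) + 8 * ln (1 + x5 s)) t
            = 0)"
proof -
  note differentiable = assms(1,2) assms(4-8)[THEN smooth_on_has_derivative] assms(9)
  show ?thesis
    using phi_vanishes_if_ODE[OF differentiable] ODE_if_phi_vanishes[OF differentiable] by blast
qed

end
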